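(* Let $s\in\mathbb R$, $p,q\in(0,+\infty]$ and $\mathcal C\in b^{s,q}_p$. Then $\delta_{\mathcal C}(x)\le \frac dp-s$ for every $x\in\mathbb R^d$, and for every $\gamma\in[-s,-s+\frac dp]$, $$\dim_H\{x\in\mathbb R^d:\ \delta_{\mathcal C}(x)\ge\gamma\}\le d-sp-\gamma p,$$ where $\dim_H$ denotes Hausdorff dimension.
   Context: Fix integers $d\ge1$, $N\ge1$ and bounded functions $\psi^{(1)},\dots,\psi^{(N)}:\mathbb R^d\to\mathbb C$ with fast decay (for every $n>0$ there is $C_n$ with $|\psi^{(i)}(x)|\le C_n(1+|x|)^{-n}$). The associated wavelet system is $\psi^{(i)}_{j,k}(x)=\psi^{(i)}(2^jx-k)$, $1\le i\le N$, $j\ge0$, $k\in\mathbb Z^d$. For $j\ge0$ and $k\in\mathbb Z^d$, $\lambda_{j,k}=\prod_{m=1}^d[k_m2^{-j},(k_m+1)2^{-j})$ is the dyadic cube of generation (scale) $j$; coefficients and wavelets are indexed indifferently by $(i,j,k)$ or by $(i,\lambda)$ with $\lambda=\lambda_{j,k}$, and $\Lambda_j$ denotes the set of pairs $(i,\lambda)$ with $\lambda$ of generation $j$. A sequence is a family $\mathcal C=(c^{(i)}_{j,k})$ of complex numbers. For $\gamma\in\mathbb R$, $x\in\mathbb R^d$, $\mathcal C\in D^\gamma(x)$ means there exist $C>0$ and indices $(i_n,j_n,k_n)$ with $j_n\to+\infty$ and $|c^{(i_n)}_{j_n,k_n}\psi^{(i_n)}_{j_n,k_n}(x)|\ge C2^{\gamma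 j_n}$; the divergence exponent is $\delta_{\mathcal C}(x)=\sup\{\gamma:\mathcal C\in D^\gamma(x)\}$. For $s\in\mathbb R$, $p,q\in(0,\infty]$, the sequence space $b^{s,q}_p$ consists of sequences such that $\varepsilon_j:=\big(\sum_{(i,\lambda)\in\Lambda_j}|c^{(i)}_\lambda 2^{(s-d/p)j}|^p\big)^{1/p}$ (a supremum over $\Lambda_j$ if $p=\infty$) satisfies $(\varepsilon_j)_{j\ge0}\in\ell^q$; it carries the (quasi-)norm $\|(\varepsilon_j)_j\|_{\ell^q}$. *)

theory Defs
  imports "HOL-Analysis.Analysis"
begin

definition hausdorff_pre :: "real \<Rightarrow> real \<Rightarrow> 'a::metric_space set \<Rightarrow> ennreal" where
  "hausdorff_pre s \<delta> A =
     (INF U \<in> {U :: nat \<Rightarrow> 'a set. A \<subseteq> (\<Union>n. U n) \<and>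
                   (\<forall>n. bounded (U n) \<and> diameter (U n) \<le> \<delta>)}.
        (\<Sum>n. ennreal (diameter (U n) powr s)))"

definition hausdorff_outer :: "real \<Rightarrow> 'a::metric_space set \<Rightarrow> ennreal" where
  "hausdorff_outer s A = (SUP \<delta> \<in> {0<..}. hausdorff_pre s \<delta> A)"

definition hausdorff_dim :: "'a::metric_space set \<Rightarrow> ereal" where
  "hausdorff_dim A = Inf {ereal s | s. s > 0 \<and> hausdorff_outer s A = 0}"

definition wavelet :: "(nat \<Rightarrow> real^'d \<Rightarrow> complex) \<Rightarrow> nat \<Rightarrow> nat \<Rightarrow> int^'d \<Rightarrow> real^'d \<Rightarrow> complex" where
  "wavelet \<psi> i j k x = \<psi> i ((2::real) ^ j *\<^sub>R x - (\<chi> m. real_of_int (k $ m)))"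

definition fast_decay :: "(real^'d \<Rightarrow> complex) \<Rightarrow> bool" where
  "fast_decay f \<longleftrightarrow> (\<forall>n::real > 0. \<exists>C. \<forall>x. norm (f x) \<le> C * (1 + norm x) powr (- n))"

definition in_D :: "nat \<Rightarrow> (nat \<Rightarrow> real^'d \<Rightarrow> complex) \<Rightarrow> (nat \<Rightarrow> nat \<Rightarrow> int^'d \<Rightarrow> complex)
                    \<Rightarrow> real \<Rightarrow> real^'d \<Rightarrow> bool" where
  "in_D N \<psi> c \<gamma> x \<longleftrightarrow>
     (\<exists>C > 0. \<exists>idx :: nat \<Rightarrow> nat \<times> nat \<times> (int^'d).
        (\<forall>n. fst (idx n) \<in> {1..N}) \<and>
        filterlim (\<lambda>n. fst (snd (idx n))) at_top sequentially \<and>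
        (\<forall>n. case idx n of (i, j, k) \<Rightarrow>
               norm (c i j k * wavelet \<psi> i j k x) \<ge> C * 2 powr (\<gamma> * real j)))"

definition div_exp :: "nat \<Rightarrow> (nat \<Rightarrow> real^'d \<Rightarrow> complex) \<Rightarrow> (nat \<Rightarrow> nat \<Rightarrow> int^'d \<Rightarrow> complex)
                       \<Rightarrow> real^'d \<Rightarrow> ereal" where
  "div_exp N \<psi> c x = Sup {ereal \<gamma> | \<gamma>. in_D N \<psi> c \<gamma> x}"

definition enn_root :: "ennreal \<Rightarrow> real \<Rightarrow> ennreal" where
  "enn_root S p = (if S = \<infinity> then \<infinity> else ennreal (enn2real S powr (1 / p)))"

definition lp_norm :: "ereal \<Rightarrow> ('a \<Rightarrow> real) \<Rightarrow> 'a set \<Rightarrow> ennreal" where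
  "lp_norm p f A =
     (if p = \<infinity> then (SUP a \<in> A. ennreal \<bar>f a\<bar>)
      else enn_root (infsum (\<lambda>a. ennreal (\<bar>f a\<bar> powr real_of_ereal p)) A) (real_of_ereal p))"

definition div_p :: "nat \<Rightarrow> ereal \<Rightarrow> real" where
  "div_p d p = (if p = \<infinity> then 0 else real d / real_of_ereal p)"

definition besov_eps :: "real \<Rightarrow> ereal \<Rightarrow> nat \<Rightarrow> (nat \<Rightarrow> nat \<Rightarrow> int^'d \<Rightarrow> complex) \<Rightarrow> nat \<Rightarrow> ennreal" where
  "besov_eps s p N c j =
     lp_norm p (\<lambda>(i, k). norm (c i j k) * 2 powr ((s - div_p CARD('d) p) * real j))
             ({1..N} \<times> (UNIV :: (int^'d) set))"

definition in_besov :: "real \<Rightarrow> ereal \<Rightarrow> ereal \<Rightarrow> nat \<Rightarrow> (nat \<Rightarrow> nat \<Rightarrow> int^'d \<Rightarrow> complex) \<Rightarrow> bool" where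
  "in_besov s p q N c \<longleftrightarrow>
     (\<forall>j. besov_eps s p N c j \<noteq> \<infinity>) \<and>
     lp_norm q (\<lambda>j. enn2real (besov_eps s p N c j)) UNIV \<noteq> \<infinity>"

end

theory Submission
  imports Defs
begin

text \<open>A Besov sequence satisfies \<open>|c\<^sub>\<lambda>| \<le> C 2^((d/p - s) j)\<close>. Since the wavelets decay
  fast, a term \<open>|c\<^sub>\<lambda> \<psi>\<^sub>\<lambda>(x)| \<ge> 2^(\<gamma> j)\<close> at a large scale \<open>j\<close> forces both
  \<open>|c\<^sub>\<lambda>| \<ge> 2^(g j)\<close>, for any \<open>g < \<gamma>\<close>, and \<open>|x - k 2^-j| \<le> 2^(-(1 - \<epsilon>) j)\<close>.
  The first fact gives \<open>\<delta>(x) \<le> d/p - s\<close>. For finite \<open>p\<close>, the \<open>\<ell>^p\<close> bound at scale \<open>j\<close>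
  leaves only \<open>O(2^((d - sp - gp) j))\<close> coefficients of that size, so \<open>{\<delta> \<ge> \<gamma>}\<close> lies in
  infinitely many unions of that many balls of radius \<open>2^(-(1 - \<epsilon>) j)\<close>; the tails of these
  covers show that its \<open>t\<close>-dimensional Hausdorff measure vanishes for every
  \<open>t > d - sp - \<gamma>p\<close>. For \<open>p = \<infinity>\<close> only \<open>\<gamma> = -s\<close> is allowed and the bound is the trivial \<open>d\<close>.\<close>

lemma two_powr_mult_of_nat: "(2::real) powr (u * real j) = (2 powr u) ^ j"
  by (simp add: powr_power mult.commute)

lemma eventually_le_two_powr:
  assumes "a > 0"
  shows "eventually (\<lambda>j. M \<le> 2 powr (a * real j)) sequentially"
proof -
  have a: "1 < (2::real) powr a" using powr_less_mono[of 0 a 2] assms by simp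
  obtain n where n: "M < (2 powr a) ^ n" using real_arch_pow[OF a] by blast
  have "M \<le> 2 powr (a * real j)" if "j \<ge> n" for j
  proof -
    have "(2 powr a) ^ n \<le> (2 powr a) ^ j" by (rule power_increasing) (use that a in auto)
    then show ?thesis using n by (simp add: two_powr_mult_of_nat)
  qed
  then show ?thesis unfolding eventually_sequentially by blast
qed

lemma geometric_partial_sum_le:
  fixes \<rho> :: real assumes "0 \<le> \<rho>" "\<rho> < 1"
  shows "(\<Sum>j=J..M. \<rho> ^ j) \<le> \<rho> ^ J / (1 - \<rho>)"
proof -
  have "(\<Sum>j=J..M. \<rho> ^ j) = (if M < J then 0 else (\<rho> ^ J - \<rho> ^ Suc M) / (1 - \<rho>))"
    using assms by (simp add: sum_gp)
  also have "\<dots> \<le> \<rho> ^ J / (1 - \<rho>)"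
    using assms by (auto simp: divide_right_mono)
  finally show ?thesis .
qed

section \<open>Hausdorff dimension of limsup sets\<close>

lemma hausdorff_pre_le_countable_cover:
  fixes E :: "'a::metric_space set" and V :: "'b \<Rightarrow> 'a set"
  assumes I: "countable I" and cov: "E \<subseteq> (\<Union>a\<in>I. V a)"
    and bd: "\<And>a. a \<in> I \<Longrightarrow> bounded (V a) \<and> diameter (V a) \<le> \<delta>" and \<delta>: "\<delta> \<ge> 0"
  shows "hausdorff_pre t \<delta> E \<le> infsum (\<lambda>a. ennreal (diameter (V a) powr t)) I"
proof -
  define U where "U n = (if n \<in> to_nat_on I ` I then V (from_nat_into I n) else {})" for n
  have U_cover: "E \<subseteq> (\<Union>n. U n) \<and> (\<forall>n. bounded (U n) \<and> diameter (U n) \<le> \<delta>)"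
  proof (intro conjI allI subsetI)
    fix x assume "x \<in> E"
    then obtain a where a: "a \<in> I" "x \<in> V a" using cov by blast
    then have "U (to_nat_on I a) = V a" using I by (simp add: U_def)
    then show "x \<in> (\<Union>n. U n)" using a by blast
  qed (use bd I \<delta> in \<open>auto simp: U_def\<close>)
  define g where "g n = ennreal (diameter (U n) powr t)" for n
  have "(\<Sum>n. g n) = infsum g UNIV"
    by (rule sums_unique[symmetric], rule has_sum_imp_sums, rule has_sum_infsum)
       (rule nonneg_summable_on_complete, simp)
  also have "\<dots> = infsum g (to_nat_on I ` I)"
    by (rule infsum_cong_neutral) (auto simp: g_def U_def)
  also have "\<dots> = infsum (g \<circ> to_nat_on I) I"
    by (rule infsum_reindex) (use I in auto)
  also have "\<dots> = infsum (\<lambda>a. ennreal (diameter (V a) powr t)) I"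
    by (rule infsum_cong) (use I in \<open>auto simp: g_def U_def\<close>)
  finally show ?thesis
    unfolding hausdorff_pre_def g_def using U_cover by (intro INF_lower2[of U]) auto
qed

lemma hausdorff_dim_le:
  fixes E :: "'a::metric_space set"
  assumes "r \<ge> 0" and "\<And>t. t > r \<Longrightarrow> hausdorff_outer t E = 0"
  shows "hausdorff_dim E \<le> ereal r"
  unfolding hausdorff_dim_def
proof (rule dense_ge)
  fix y assume "ereal r < y"
  then show "Inf {ereal s | s. s > 0 \<and> hausdorff_outer s E = 0} \<le> y"
    using assms by (cases y) (auto intro!: Inf_lower)
qed

lemma hausdorff_pre_le_cball_cover:
  fixes E :: "'a::euclidean_space set" and Z :: "nat \<Rightarrow> 'a set"
  assumes fin: "\<And>j. finite (Z j)"
    and cov: "E \<subseteq> (\<Union>j\<in>{J..}. \<Union>z\<in>Z j. cball z (r j))"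
    and r: "\<And>j. j \<ge> J \<Longrightarrow> 0 \<le> r j \<and> 2 * r j \<le> \<delta>" and t: "t > 0"
    and S: "\<And>M. (\<Sum>j=J..M. real (card (Z j)) * (2 * r j) powr t) \<le> S"
  shows "hausdorff_pre t \<delta> E \<le> ennreal S"
proof -
  define I where "I = (SIGMA j:{J..}. Z j)"
  define V :: "nat \<times> 'a \<Rightarrow> 'a set" where "V = (\<lambda>(j, z). cball z (r j))"
  define f where "f = (\<lambda>(j, z::'a). (2 * r j) powr t)"
  have diam: "diameter (V a) powr t = f a" if "a \<in> I" for a
    using that r[of "fst a"] by (auto simp: I_def V_def f_def)
  have "hausdorff_pre t \<delta> E \<le> infsum (\<lambda>a. ennreal (diameter (V a) powr t)) I"
  proof (rule hausdorff_pre_le_countable_cover)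
    show "countable I"
      unfolding I_def by (intro countable_SIGMA) (auto intro: countable_finite fin)
    show "E \<subseteq> (\<Union>a\<in>I. V a)" using cov by (force simp: I_def V_def)
    show "0 \<le> \<delta>" using r[of J] by simp
    fix a assume "a \<in> I"
    then show "bounded (V a) \<and> diameter (V a) \<le> \<delta>"
      using r[of "fst a"] by (auto simp: I_def V_def)
  qed
  also have "\<dots> \<le> ennreal S"
  proof (rule infsum_le_finite_sums)
    fix F assume F: "finite F" "F \<subseteq> I"
    define M where "M = Max (insert J (fst ` F))"
    have FS: "F \<subseteq> (SIGMA j:{J..M}. Z j)"
      using F unfolding M_def I_def by (force intro!: Max_ge)
    have "(\<Sum>a\<in>F. ennreal (diameter (V a) powr t)) = (\<Sum>a\<in>F. ennreal (f a))"
      using F(2) diam by (intro sum.cong) auto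
    also have "\<dots> \<le> (\<Sum>a\<in>(SIGMA j:{J..M}. Z j). ennreal (f a))"
      by (rule sum_mono2) (use FS fin in auto)
    also have "\<dots> = ennreal (\<Sum>a\<in>(SIGMA j:{J..M}. Z j). f a)"
      by (rule sum_ennreal) (simp add: f_def split: prod.split)
    also have "(\<Sum>a\<in>(SIGMA j:{J..M}. Z j). f a) = (\<Sum>j=J..M. \<Sum>z\<in>Z j. (2 * r j) powr t)"
      unfolding f_def by (rule sum.Sigma[symmetric]) (auto simp: fin)
    also have "\<dots> = (\<Sum>j=J..M. real (card (Z j)) * (2 * r j) powr t)"
      by simp
    also have "ennreal \<dots> \<le> ennreal S" using S by (rule ennreal_leI)
    finally show "(\<Sum>a\<in>F. ennreal (diameter (V a) powr t)) \<le> ennreal S" .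
  qed (rule nonneg_summable_on_complete, simp)
  finally show ?thesis .
qed

lemma hausdorff_pre_le_limsup_cover_tail:
  fixes E :: "'a::euclidean_space set" and Z :: "nat \<Rightarrow> 'a set"
  assumes fin: "\<And>j. finite (Z j)" and card: "\<And>j. real (card (Z j)) \<le> K * 2 powr (\<alpha> * real j)"
    and \<beta>: "\<beta> \<ge> 0" and t: "t > 0" "t * \<beta> > \<alpha>"
    and cov: "\<And>x. x \<in> E \<Longrightarrow> \<exists>j\<ge>J. \<exists>z\<in>Z j. dist x z \<le> 2 powr (- \<beta> * real j)"
    and \<delta>: "2 * (2 powr - \<beta>) ^ J \<le> \<delta>"
  shows "hausdorff_pre t \<delta> E
           \<le> ennreal (max K 0 * 2 powr t * ((2 powr (\<alpha> - t * \<beta>)) ^ J / (1 - 2 powr (\<alpha> - t * \<beta>))))"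
proof -
  define \<rho> where "\<rho> = (2::real) powr (\<alpha> - t * \<beta>)"
  define \<sigma> where "\<sigma> = (2::real) powr (- \<beta>)"
  define K' where "K' = max K 0 * 2 powr t"
  have \<rho>: "0 < \<rho>" "\<rho> < 1" using t by (auto simp: \<rho>_def powr_less_one)
  have \<sigma>: "0 < \<sigma>" "\<sigma> \<le> 1" using powr_mono[of "- \<beta>" 0 2] \<beta> by (auto simp: \<sigma>_def)
  have term_le: "real (card (Z j)) * (2 * \<sigma> ^ j) powr t \<le> K' * \<rho> ^ j" for j
  proof -
    have "real (card (Z j)) \<le> max K 0 * 2 powr (\<alpha> * real j)"
      using card[of j] by (smt (verit) mult_right_mono powr_ge_zero)
    moreover have "(2 * \<sigma> ^ j) powr t = 2 powr t * 2 powr (- \<beta> * real j * t)"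
      using \<sigma> by (simp add: powr_mult \<sigma>_def two_powr_mult_of_nat[symmetric] powr_powr)
    ultimately have "real (card (Z j)) * (2 * \<sigma> ^ j) powr t
        \<le> K' * (2 powr (\<alpha> * real j) * 2 powr (- \<beta> * real j * t))"
      by (simp add: K'_def mult_right_mono mult_ac)
    also have "\<dots> = K' * \<rho> ^ j"
      by (simp add: \<rho>_def two_powr_mult_of_nat[symmetric] powr_add[symmetric] algebra_simps)
    finally show ?thesis .
  qed
  have "hausdorff_pre t \<delta> E \<le> ennreal (K' * (\<rho> ^ J / (1 - \<rho>)))"
  proof (rule hausdorff_pre_le_cball_cover[OF fin _ _ t(1)])
    show "E \<subseteq> (\<Union>j\<in>{J..}. \<Union>z\<in>Z j. cball z (\<sigma> ^ j))"
    proof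
      fix x assume "x \<in> E"
      then obtain j z where "j \<ge> J" "z \<in> Z j" "dist x z \<le> 2 powr (- \<beta> * real j)"
        using cov by blast
      then show "x \<in> (\<Union>j\<in>{J..}. \<Union>z\<in>Z j. cball z (\<sigma> ^ j))"
        unfolding \<sigma>_def two_powr_mult_of_nat by (force simp: dist_commute)
    qed
    show "0 \<le> \<sigma> ^ j \<and> 2 * \<sigma> ^ j \<le> \<delta>" if "j \<ge> J" for j
    proof -
      have "\<sigma> ^ j \<le> \<sigma> ^ J" by (rule power_decreasing) (use that \<sigma> in auto)
      then show ?thesis using \<delta> \<sigma> by (simp add: \<sigma>_def)
    qed
    show "(\<Sum>j=J..M. real (card (Z j)) * (2 * \<sigma> ^ j) powr t) \<le> K' * (\<rho> ^ J / (1 - \<rho>))" for M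
    proof -
      have "(\<Sum>j=J..M. real (card (Z j)) * (2 * \<sigma> ^ j) powr t) \<le> K' * (\<Sum>j=J..M. \<rho> ^ j)"
        unfolding sum_distrib_left by (rule sum_mono) (rule term_le)
      also have "\<dots> \<le> K' * (\<rho> ^ J / (1 - \<rho>))"
        using \<rho> by (intro mult_left_mono geometric_partial_sum_le) (auto simp: K'_def)
      finally show ?thesis .
    qed
  qed
  then show ?thesis by (simp add: K'_def \<rho>_def)
qed

lemma hausdorff_outer_eq_0_if_limsup_cover:
  fixes E :: "'a::euclidean_space set" and Z :: "nat \<Rightarrow> 'a set"
  assumes fin: "\<And>j. finite (Z j)" and card: "\<And>j. real (card (Z j)) \<le> K * 2 powr (\<alpha> * real j)"
    and \<beta>: "\<beta> > 0" and t: "t > 0" "t * \<beta> > \<alpha>"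
    and cov: "\<And>x J. x \<in> E \<Longrightarrow> \<exists>j\<ge>J. \<exists>z\<in>Z j. dist x z \<le> 2 powr (- \<beta> * real j)"
  shows "hausdorff_outer t E = 0"
proof -
  define \<rho> where "\<rho> = (2::real) powr (\<alpha> - t * \<beta>)"
  define \<sigma> where "\<sigma> = (2::real) powr (- \<beta>)"
  have \<rho>: "0 < \<rho>" "\<rho> < 1" and \<sigma>: "0 < \<sigma>" "\<sigma> < 1"
    using t \<beta> by (auto simp: \<rho>_def \<sigma>_def powr_less_one)
  have small: "hausdorff_pre t \<delta> E \<le> 0 + ennreal \<eta>" if "\<delta> > 0" "\<eta> > 0" for \<delta> \<eta>
  proof -
    have "(\<lambda>J. 2 * \<sigma> ^ J) \<longlonglongrightarrow> 2 * 0"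
      "(\<lambda>J. max K 0 * 2 powr t * (\<rho> ^ J / (1 - \<rho>))) \<longlonglongrightarrow> max K 0 * 2 powr t * (0 / (1 - \<rho>))"
      using \<rho> \<sigma> by (intro tendsto_intros LIMSEQ_power_zero; simp)+
    then have "eventually (\<lambda>J. 2 * \<sigma> ^ J < \<delta> \<and> max K 0 * 2 powr t * (\<rho> ^ J / (1 - \<rho>)) < \<eta>)
                 sequentially"
      using that by (intro eventually_conj order_tendstoD) auto
    then obtain J where "2 * \<sigma> ^ J < \<delta>" "max K 0 * 2 powr t * (\<rho> ^ J / (1 - \<rho>)) < \<eta>"
      by (auto dest: eventually_happens)
    have "hausdorff_pre t \<delta> E \<le> ennreal (max K 0 * 2 powr t * (\<rho> ^ J / (1 - \<rho>)))"
      unfolding \<rho>_def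
      by (rule hausdorff_pre_le_limsup_cover_tail[OF fin card _ t])
         (use cov \<beta> \<open>2 * \<sigma> ^ J < \<delta>\<close> in \<open>auto simp: \<sigma>_def\<close>)
    also have "\<dots> \<le> ennreal \<eta>" using \<open>max K 0 * 2 powr t * (\<rho> ^ J / (1 - \<rho>)) < \<eta>\<close>
      by (intro ennreal_leI) simp
    finally show ?thesis by simp
  qed
  have "hausdorff_pre t \<delta> E \<le> 0" if "\<delta> > 0" for \<delta>
    by (rule ennreal_le_epsilon) (rule small[OF that])
  then show ?thesis unfolding hausdorff_outer_def by (simp add: SUP_constant)
qed

lemma dist_floor_grid_point_le:
  fixes x :: "real^'d" assumes h: "h > 0"
  shows "dist x (\<chi> m. real_of_int \<lfloor>h * x $ m\<rfloor> / h) \<le> real CARD('d) / h"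
proof -
  have coord: "\<bar>x $ m - real_of_int \<lfloor>h * x $ m\<rfloor> / h\<bar> \<le> 1 / h" for m
  proof -
    have "0 \<le> h * x $ m - \<lfloor>h * x $ m\<rfloor>" "h * x $ m - \<lfloor>h * x $ m\<rfloor> \<le> 1" by linarith+
    moreover have "x $ m - real_of_int \<lfloor>h * x $ m\<rfloor> / h = (h * x $ m - \<lfloor>h * x $ m\<rfloor>) / h"
      using h by (simp add: field_simps)
    ultimately show ?thesis using h by (simp add: divide_right_mono)
  qed
  have "dist x (\<chi> m. real_of_int \<lfloor>h * x $ m\<rfloor> / h)
      \<le> (\<Sum>m\<in>UNIV. \<bar>(x - (\<chi> m. real_of_int \<lfloor>h * x $ m\<rfloor> / h)) $ m\<bar>)"
    unfolding dist_norm by (rule norm_le_l1_cart)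
  also have "\<dots> \<le> (\<Sum>m\<in>(UNIV :: 'd set). 1 / h)"
    by (intro sum_mono) (simp add: coord)
  finally show ?thesis by simp
qed

definition cube_grid :: "nat \<Rightarrow> nat \<Rightarrow> (real^'d) set" where
  "cube_grid a j = (\<lambda>f. \<chi> m. real_of_int (f m) / 2 ^ (a * j)) `
     (UNIV \<rightarrow>\<^sub>E {- (2 ^ ((a + 1) * j) + 1)..2 ^ ((a + 1) * j) + 1})"

lemma finite_cube_grid: "finite (cube_grid a j)"
  unfolding cube_grid_def by (intro finite_imageI finite_PiE) auto

lemma card_cube_grid_le:
  "real (card (cube_grid a j :: (real^'d) set))
     \<le> 5 ^ CARD('d) * 2 powr (real (a + 1) * real CARD('d) * real j)"
proof -
  define L :: int where "L = 2 ^ ((a + 1) * j) + 1"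
  have "card (cube_grid a j :: (real^'d) set) \<le> card (UNIV \<rightarrow>\<^sub>E {- L..L} :: ('d \<Rightarrow> int) set)"
    unfolding cube_grid_def L_def by (rule card_image_le) (intro finite_PiE, auto)
  also have "\<dots> = nat (2 * L + 1) ^ CARD('d)" by (simp add: card_PiE)
  finally have "real (card (cube_grid a j :: (real^'d) set)) \<le> real (nat (2 * L + 1)) ^ CARD('d)"
    by (metis of_nat_le_iff of_nat_power)
  also have "\<dots> = (2 * 2 ^ ((a + 1) * j) + 3) ^ CARD('d)"
    unfolding L_def by (simp add: add.commute)
  also have "\<dots> \<le> (5 * 2 ^ ((a + 1) * j)) ^ CARD('d)"
    using one_le_power[of "2::real" "(a + 1) * j"] by (intro power_mono) auto
  also have "\<dots> = 5 ^ CARD('d) * 2 ^ ((a + 1) * j * CARD('d))"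
    by (simp add: power_mult_distrib power_mult)
  also have "(2::real) ^ ((a + 1) * j * CARD('d)) = 2 powr (real (a + 1) * real CARD('d) * real j)"
    by (subst powr_realpow[symmetric]) (auto simp: algebra_simps)
  finally show ?thesis .
qed

lemma cube_grid_near:
  fixes x :: "real^'d"
  assumes x: "\<And>m. \<bar>x $ m\<bar> \<le> 2 ^ j"
  shows "\<exists>z\<in>cube_grid a j. dist x z \<le> real CARD('d) / 2 ^ (a * j)"
proof
  define h :: real where "h = 2 ^ (a * j)"
  have h: "h > 0" by (simp add: h_def)
  show "dist x (\<chi> m. real_of_int \<lfloor>h * x $ m\<rfloor> / h) \<le> real CARD('d) / 2 ^ (a * j)"
    using dist_floor_grid_point_le[OF h] by (simp add: h_def)
  have hx: "\<bar>h * x $ m\<bar> \<le> 2 ^ ((a + 1) * j)" for m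
  proof -
    have "\<bar>h * x $ m\<bar> \<le> h * 2 ^ j" using x[of m] h by (simp add: abs_mult)
    also have "\<dots> = 2 ^ ((a + 1) * j)" by (simp add: h_def power_add algebra_simps)
    finally show ?thesis .
  qed
  show "(\<chi> m. real_of_int \<lfloor>h * x $ m\<rfloor> / h) \<in> cube_grid a j"
    unfolding cube_grid_def h_def
  proof (rule image_eqI[of _ _ "\<lambda>m. \<lfloor>h * x $ m\<rfloor>"])
    have "\<lfloor>h * x $ m\<rfloor> \<in> {- (2 ^ ((a + 1) * j) + 1)..2 ^ ((a + 1) * j) + 1}" for m
      using hx[of m] by (auto simp: abs_le_iff floor_le_iff le_floor_iff)
    then show "(\<lambda>m. \<lfloor>h * x $ m\<rfloor>) \<in> UNIV \<rightarrow>\<^sub>E {- (2 ^ ((a + 1) * j) + 1)..2 ^ ((a + 1) * j) + 1}"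
      by (simp add: PiE_def extensional_def Pi_def)
  qed (simp add: h_def)
qed

text \<open>Every point lies within \<open>2^(-(a - 1) j)\<close> of \<open>cube_grid a j\<close> for all large \<open>j\<close>, and \<open>a\<close> is
  chosen with \<open>t (a - 1) > (a + 1) d\<close>.\<close>
lemma hausdorff_dim_le_CARD: "hausdorff_dim (E :: (real^'d) set) \<le> ereal (real CARD('d))"
proof (rule hausdorff_dim_le)
  define D where "D = real CARD('d)"
  fix t assume "real CARD('d) < t"
  then have tD: "D < t" "D \<ge> 1" by (simp_all add: D_def)
  define a :: nat where "a = nat \<lceil>(t + D) / (t - D)\<rceil> + 1"
  have "real a > (t + D) / (t - D)" "(t + D) / (t - D) \<ge> 1"
    unfolding a_def using tD by (linarith, simp add: le_divide_eq)
  then have a: "real a \<ge> 2" "real a * (t - D) > t + D"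
    using tD by (simp_all add: divide_less_eq a_def)
  show "hausdorff_outer t E = 0"
  proof (rule hausdorff_outer_eq_0_if_limsup_cover[of "cube_grid a" "5 ^ CARD('d)" "real (a + 1) * D"])
    show "real (card (cube_grid a j :: (real^'d) set)) \<le> 5 ^ CARD('d) * 2 powr (real (a + 1) * D * real j)"
      for j using card_cube_grid_le[of a j] by (simp add: D_def)
  next
    fix x :: "real^'d" and J
    obtain n where n: "D + (\<Sum>m\<in>UNIV. \<bar>x $ m\<bar>) < 2 ^ n"
      using real_arch_pow[of 2] by auto
    define j where "j = max J n"
    have "(2::real) ^ n \<le> 2 ^ j" by (simp add: j_def)
    then have bound: "D + (\<Sum>m\<in>UNIV. \<bar>x $ m\<bar>) \<le> 2 ^ j" using n by linarith
    have "\<bar>x $ m\<bar> \<le> 2 ^ j" for m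
      using member_le_sum[of m UNIV "\<lambda>m. \<bar>x $ m\<bar>"] bound tD by simp
    then obtain z where z: "z \<in> cube_grid a j" "dist x z \<le> D / 2 ^ (a * j)"
      using cube_grid_near[of x j a] unfolding D_def by blast
    have "D \<le> 2 ^ j" using bound sum_nonneg[of UNIV "\<lambda>m. \<bar>x $ m\<bar>"] by linarith
    then have "D / 2 ^ (a * j) \<le> 2 ^ j / 2 ^ (a * j)" by (simp add: divide_right_mono)
    also have "\<dots> = 2 powr (- (real a - 1) * real j)"
      by (simp add: powr_realpow[symmetric] powr_diff[symmetric] algebra_simps)
    finally have "dist x z \<le> 2 powr (- (real a - 1) * real j)" using z(2) by linarith
    then show "\<exists>j\<ge>J. \<exists>z\<in>cube_grid a j. dist x z \<le> 2 powr (- (real a - 1) * real j)"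
      using z(1) by (intro exI[of _ j]) (auto simp: j_def)
  qed (use a tD in \<open>auto simp: finite_cube_grid algebra_simps\<close>)
qed simp

section \<open>Besov sequence spaces\<close>

lemma ennreal_sum_le_infsum:
  fixes f :: "'a \<Rightarrow> ennreal"
  assumes "finite F" "F \<subseteq> A"
  shows "sum f F \<le> infsum f A"
proof -
  have "infsum f F \<le> infsum f A"
    by (rule infsum_mono_neutral) (use assms in \<open>auto intro: nonneg_summable_on_complete\<close>)
  then show ?thesis using assms by simp
qed

lemma lp_norm_entry_le:
  assumes p: "0 < p" and a: "a \<in> A"
  shows "ennreal \<bar>f a\<bar> \<le> lp_norm p f A"
proof (cases p)
  case PInf
  then show ?thesis using a by (auto simp: lp_norm_def intro: SUP_upper)
next
  case (real P)
  then have P: "P > 0" using p by simp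
  define X where "X = infsum (\<lambda>a. ennreal (\<bar>f a\<bar> powr P)) A"
  have lp: "lp_norm p f A = enn_root X P" by (simp add: real lp_norm_def X_def)
  show ?thesis
  proof (cases X rule: ennreal_cases)
    case (real x)
    have "ennreal (\<bar>f a\<bar> powr P) \<le> X"
      using ennreal_sum_le_infsum[of "{a}" A] a by (simp add: X_def)
    then have "\<bar>f a\<bar> powr P \<le> x" using real by simp
    then have "(\<bar>f a\<bar> powr P) powr (1 / P) \<le> x powr (1 / P)"
      using P by (intro powr_mono2) auto
    then show ?thesis using P real by (simp add: lp enn_root_def powr_powr ennreal_leI)
  qed (simp add: lp enn_root_def)
qed (use p in simp)

lemma lp_norm_ereal_le_imp_sum_powr_le:
  assumes le: "lp_norm (ereal P) f A \<le> ennreal B" and P: "P > 0" and B: "B \<ge> 0"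
    and F: "finite F" "F \<subseteq> A"
  shows "(\<Sum>a\<in>F. \<bar>f a\<bar> powr P) \<le> B powr P"
proof -
  define X where "X = infsum (\<lambda>a. ennreal (\<bar>f a\<bar> powr P)) A"
  have lp: "lp_norm (ereal P) f A = enn_root X P" by (simp add: lp_norm_def X_def)
  show ?thesis
  proof (cases X rule: ennreal_cases)
    case (real x)
    then have "x powr (1 / P) \<le> B" using le B by (simp add: lp enn_root_def)
    then have "(x powr (1 / P)) powr P \<le> B powr P" using P by (intro powr_mono2) auto
    then have xB: "x \<le> B powr P" using P real by (simp add: powr_powr)
    have "ennreal (\<Sum>a\<in>F. \<bar>f a\<bar> powr P) \<le> X"
      using ennreal_sum_le_infsum[OF F, of "\<lambda>a. ennreal (\<bar>f a\<bar> powr P)"] by (simp add: X_def)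
    then have "(\<Sum>a\<in>F. \<bar>f a\<bar> powr P) \<le> x" using real by simp
    then show ?thesis using xB by linarith
  qed (use le in \<open>simp add: lp enn_root_def top_unique\<close>)
qed

lemma finite_card_le_if_finite_sums_le:
  fixes h :: "'a \<Rightarrow> real"
  assumes sums: "\<And>F. finite F \<Longrightarrow> F \<subseteq> A \<Longrightarrow> (\<Sum>a\<in>F. h a) \<le> K"
    and lb: "\<And>a. a \<in> A \<Longrightarrow> m \<le> h a" and m: "m > 0"
  shows "finite A \<and> real (card A) \<le> K / m"
proof -
  have card_le: "real (card F) \<le> K / m" if "finite F" "F \<subseteq> A" for F
  proof -
    have "real (card F) * m \<le> (\<Sum>a\<in>F. h a)" using that lb by (intro sum_bounded_below) auto
    also have "\<dots> \<le> K" using sums that by blast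
    finally show ?thesis using m by (simp add: le_divide_eq)
  qed
  have "finite A"
  proof (rule ccontr)
    assume "infinite A"
    then obtain F where "finite F" "card F = nat \<lceil>K / m\<rceil> + 1" "F \<subseteq> A"
      using infinite_arbitrarily_large by blast
    then show False using card_le[of F] by linarith
  qed
  then show ?thesis using card_le by blast
qed

lemma in_besov_eps_bounded:
  fixes c :: "nat \<Rightarrow> nat \<Rightarrow> int^'d \<Rightarrow> complex"
  assumes "in_besov s p q N c" and "0 < q"
  shows "\<exists>B\<ge>0. \<forall>j. besov_eps s p N c j \<le> ennreal B"
proof -
  define L where "L = lp_norm q (\<lambda>j. enn2real (besov_eps s p N c j)) UNIV"
  have fin: "besov_eps s p N c j \<noteq> \<infinity>" "L \<noteq> \<infinity>" for j
    using assms(1) by (auto simp: in_besov_def L_def)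
  have "besov_eps s p N c j \<le> ennreal (enn2real L)" for j
  proof -
    have "besov_eps s p N c j = ennreal \<bar>enn2real (besov_eps s p N c j)\<bar>"
      using fin(1)[of j] by (simp add: ennreal_enn2real_if)
    also have "\<dots> \<le> L" unfolding L_def by (rule lp_norm_entry_le) (use assms(2) in auto)
    finally show ?thesis using fin(2) by (simp add: ennreal_enn2real_if)
  qed
  then show ?thesis by (intro exI[of _ "enn2real L"]) auto
qed

lemma in_besov_coeff_bound:
  fixes c :: "nat \<Rightarrow> nat \<Rightarrow> int^'d \<Rightarrow> complex"
  assumes "in_besov s p q N c" and "0 < p" "0 < q"
  shows "\<exists>B\<ge>0. \<forall>i\<in>{1..N}. \<forall>j k.
           norm (c i j k) \<le> B * 2 powr ((div_p CARD('d) p - s) * real j)"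
proof -
  obtain B where B: "B \<ge> 0" "\<And>j. besov_eps s p N c j \<le> ennreal B"
    using in_besov_eps_bounded[OF assms(1,3)] by blast
  have "norm (c i j k) \<le> B * 2 powr ((div_p CARD('d) p - s) * real j)" if "i \<in> {1..N}" for i j k
  proof -
    have "ennreal (norm (c i j k) * 2 powr ((s - div_p CARD('d) p) * real j)) \<le> besov_eps s p N c j"
      unfolding besov_eps_def using that
      by (intro order_trans[OF _ lp_norm_entry_le[OF assms(2), of "(i, k)"]]) auto
    then have bound: "norm (c i j k) * 2 powr ((s - div_p CARD('d) p) * real j) \<le> B"
      using B(1) B(2)[of j] by (metis ennreal_le_iff order_trans)
    have "2 powr ((s - div_p CARD('d) p) * real j) * 2 powr ((div_p CARD('d) p - s) * real j) = 1"
      by (simp add: powr_add[symmetric] algebra_simps)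
    then have "norm (c i j k) = norm (c i j k) * 2 powr ((s - div_p CARD('d) p) * real j)
        * 2 powr ((div_p CARD('d) p - s) * real j)"
      by (simp add: mult.assoc)
    also have "\<dots> \<le> B * 2 powr ((div_p CARD('d) p - s) * real j)"
      using bound by (rule mult_right_mono) simp
    finally show ?thesis .
  qed
  then show ?thesis using B(1) by blast
qed

definition large_coeffs ::
    "nat \<Rightarrow> (nat \<Rightarrow> nat \<Rightarrow> int^'d \<Rightarrow> complex) \<Rightarrow> real \<Rightarrow> nat \<Rightarrow> (nat \<times> (int^'d)) set"
  where "large_coeffs N c g j = {(i, k). i \<in> {1..N} \<and> 2 powr (g * real j) \<le> norm (c i j k)}"

lemma in_besov_card_large_coeffs:
  fixes c :: "nat \<Rightarrow> nat \<Rightarrow> int^'d \<Rightarrow> complex"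
  assumes besov: "in_besov s (ereal P) q N c" and P: "0 < P" and q: "0 < q"
  shows "\<exists>K. \<forall>g j. finite (large_coeffs N c g j) \<and>
           real (card (large_coeffs N c g j)) \<le> K * 2 powr ((real CARD('d) - s * P - g * P) * real j)"
proof -
  define D where "D = real CARD('d)"
  obtain B where B: "B \<ge> 0" "\<And>j. besov_eps s (ereal P) N c j \<le> ennreal B"
    using in_besov_eps_bounded[OF besov q] by blast
  have "finite (large_coeffs N c g j) \<and>
        real (card (large_coeffs N c g j)) \<le> B powr P * 2 powr ((D - s * P - g * P) * real j)" for g j
  proof -
    define f where "f = (\<lambda>(i, k). norm (c i j k) * 2 powr ((s - D / P) * real j))"
    define m where "m = (2 powr (g * real j) * 2 powr ((s - D / P) * real j)) powr P"
    have lp: "lp_norm (ereal P) f ({1..N} \<times> UNIV) \<le> ennreal B"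
      using B(2)[of j] by (simp add: besov_eps_def div_p_def f_def D_def)
    have m: "m = 2 powr (- ((D - s * P - g * P) * real j))"
    proof -
      have "m = 2 powr ((g * real j + (s - D / P) * real j) * P)"
        unfolding m_def by (simp add: powr_add[symmetric] powr_powr)
      also have "(g * real j + (s - D / P) * real j) * P = - ((D - s * P - g * P) * real j)"
        using P by (simp add: field_simps)
      finally show ?thesis .
    qed
    have "finite (large_coeffs N c g j) \<and> real (card (large_coeffs N c g j)) \<le> B powr P / m"
    proof (rule finite_card_le_if_finite_sums_le[where h = "\<lambda>a. \<bar>f a\<bar> powr P"])
      fix F assume "finite F" "F \<subseteq> large_coeffs N c g j"
      then show "(\<Sum>a\<in>F. \<bar>f a\<bar> powr P) \<le> B powr P"
        by (intro lp_norm_ereal_le_imp_sum_powr_le[OF lp P B(1)]) (auto simp: large_coeffs_def)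
    next
      fix a assume "a \<in> large_coeffs N c g j"
      then show "m \<le> \<bar>f a\<bar> powr P"
        unfolding m_def f_def large_coeffs_def using P by (auto intro!: powr_mono2 mult_right_mono)
    qed (simp add: m_def)
    then show ?thesis by (simp add: m powr_minus divide_inverse)
  qed
  then show ?thesis unfolding D_def by blast
qed

section \<open>Divergence exponent\<close>

lemma fast_decay_uniform:
  assumes "finite I" and "\<And>i. i \<in> I \<Longrightarrow> fast_decay (\<psi> i)" and "n > 0"
  shows "\<exists>C\<ge>1. \<forall>i\<in>I. \<forall>y. norm (\<psi> i y) \<le> C * (1 + norm y) powr (- n)"
proof -
  have "\<forall>i\<in>I. \<exists>C. \<forall>y. norm (\<psi> i y) \<le> C * (1 + norm y) powr (- n)"
    using assms(2,3) unfolding fast_decay_def by blast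
  then obtain C where C: "\<And>i y. i \<in> I \<Longrightarrow> norm (\<psi> i y) \<le> C i * (1 + norm y) powr (- n)"
    by metis
  define C' where "C' = 1 + (\<Sum>i\<in>I. \<bar>C i\<bar>)"
  have "C i \<le> C'" if "i \<in> I" for i
    using member_le_sum[OF that, of "\<lambda>i. \<bar>C i\<bar>"] assms(1) by (simp add: C'_def)
  then have "norm (\<psi> i y) \<le> C' * (1 + norm y) powr (- n)" if "i \<in> I" for i y
    using C[OF that, of y] that by (smt (verit) mult_right_mono powr_ge_zero)
  moreover have "C' \<ge> 1" by (simp add: C'_def sum_nonneg)
  ultimately show ?thesis by blast
qed

definition dyadic_corner :: "nat \<Rightarrow> int^'d \<Rightarrow> real^'d" where
  "dyadic_corner j k = (\<chi> m. real_of_int (k $ m) / 2 ^ j)"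

lemma wavelet_eq_dyadic_corner:
  "wavelet \<psi> i j k x = \<psi> i ((2::real) ^ j *\<^sub>R (x - dyadic_corner j k))"
proof -
  have "(2::real) ^ j *\<^sub>R dyadic_corner j k = (\<chi> m. real_of_int (k $ m))"
    by (simp add: dyadic_corner_def vec_eq_iff)
  then show ?thesis by (simp add: wavelet_def scaleR_right_diff_distrib)
qed

lemma in_D_frequently_large:
  assumes "in_D N \<psi> c \<gamma> x"
  shows "\<exists>C>0. \<forall>J. \<exists>j\<ge>J. \<exists>i\<in>{1..N}. \<exists>k.
           C * 2 powr (\<gamma> * real j) \<le> norm (c i j k) * norm (wavelet \<psi> i j k x)"
proof -
  obtain C idx where C: "C > 0" and i: "\<And>n. fst (idx n) \<in> {1..N}"
    and lim: "filterlim (\<lambda>n. fst (snd (idx n))) at_top sequentially"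
    and large: "\<And>n. case idx n of (i, j, k) \<Rightarrow>
                  norm (c i j k * wavelet \<psi> i j k x) \<ge> C * 2 powr (\<gamma> * real j)"
    using assms unfolding in_D_def by blast
  have "\<exists>j\<ge>J. \<exists>i\<in>{1..N}. \<exists>k. C * 2 powr (\<gamma> * real j) \<le> norm (c i j k) * norm (wavelet \<psi> i j k x)"
    for J
  proof -
    obtain n where "J \<le> fst (snd (idx n))"
      using lim unfolding filterlim_at_top eventually_sequentially by blast
    then show ?thesis using i[of n] large[of n] by (cases "idx n") (force simp: norm_mult)
  qed
  then show ?thesis using C by blast
qed

lemma large_product_imp_large_factor:
  fixes a b C C\<psi> \<gamma> g t :: real
  assumes "C > 0" "C\<psi> > 0" "a \<ge> 0"
    and prod: "C * 2 powr (\<gamma> * t) \<le> a * b" and b: "b \<le> C\<psi>"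
    and t: "C\<psi> / C \<le> 2 powr ((\<gamma> - g) * t)"
  shows "2 powr (g * t) \<le> a"
proof -
  have "C\<psi> * 2 powr (g * t) \<le> C * 2 powr ((\<gamma> - g) * t) * 2 powr (g * t)"
    using t assms(1) by (intro mult_right_mono) (auto simp: divide_le_eq mult.commute)
  also have "\<dots> = C * 2 powr (\<gamma> * t)" by (simp add: powr_add[symmetric] algebra_simps)
  also have "\<dots> \<le> a * C\<psi>" using prod mult_left_mono[OF b assms(3)] by linarith
  finally show ?thesis using assms(2) by (simp add: mult.commute)
qed

lemma large_product_imp_small_shift:
  fixes a b u B C C\<psi> n w \<gamma> \<epsilon> t :: real
  assumes "C > 0" "C\<psi> \<ge> 0" "n > 0" "u \<ge> 1" "t \<ge> 0"
    and prod: "C * 2 powr (\<gamma> * t) \<le> a * b" and a: "0 \<le> a" "a \<le> B * 2 powr (w * t)"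
    and b: "0 \<le> b" "b \<le> C\<psi> * u powr (- n)" and t: "B * C\<psi> / C \<le> 2 powr t"
    and n: "1 + w - \<gamma> \<le> n * \<epsilon>"
  shows "u \<le> 2 powr (\<epsilon> * t)"
proof -
  have "a * b \<le> B * 2 powr (w * t) * (C\<psi> * u powr (- n))"
    by (rule mult_mono) (use a b in auto)
  then have "C * 2 powr (\<gamma> * t) * u powr n \<le> B * 2 powr (w * t) * (C\<psi> * u powr (- n)) * u powr n"
    using prod by (intro mult_right_mono) auto
  also have "\<dots> = B * C\<psi> * 2 powr (w * t)"
    using assms(4) by (simp add: mult_ac powr_add[symmetric])
  also have "\<dots> \<le> C * 2 powr t * 2 powr (w * t)"
    using t assms(1) by (intro mult_right_mono) (auto simp: divide_le_eq mult.commute)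
  finally have "2 powr (\<gamma> * t) * u powr n \<le> 2 powr (\<gamma> * t) * 2 powr ((1 + w - \<gamma>) * t)"
    using assms(1) by (simp add: powr_add[symmetric] algebra_simps)
  then have "u powr n \<le> 2 powr ((1 + w - \<gamma>) * t)" by simp
  also have "\<dots> \<le> 2 powr ((n * \<epsilon>) * t)" using n assms(5) by (intro powr_mono mult_right_mono) auto
  finally have "(u powr n) powr (1 / n) \<le> (2 powr ((n * \<epsilon>) * t)) powr (1 / n)"
    using assms(3) by (intro powr_mono2) auto
  then show ?thesis using assms(3,4) by (simp add: powr_powr)
qed

lemma in_D_imp_large_coeff_small_shift:
  fixes \<psi> :: "nat \<Rightarrow> real^'d \<Rightarrow> complex" and c :: "nat \<Rightarrow> nat \<Rightarrow> int^'d \<Rightarrow> complex"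
  assumes decay: "\<And>i. i \<in> {1..N} \<Longrightarrow> fast_decay (\<psi> i)"
    and coeff: "\<And>i j k. i \<in> {1..N} \<Longrightarrow> norm (c i j k) \<le> B * 2 powr (w * real j)"
    and inD: "in_D N \<psi> c \<gamma> x" and g: "g < \<gamma>" and \<epsilon>: "\<epsilon> > 0"
  shows "\<exists>j\<ge>J. \<exists>i\<in>{1..N}. \<exists>k. 2 powr (g * real j) \<le> norm (c i j k) \<and>
           1 + norm ((2::real) ^ j *\<^sub>R (x - dyadic_corner j k)) \<le> 2 powr (\<epsilon> * real j)"
proof -
  obtain C where C: "C > 0" and freq: "\<And>J. \<exists>j\<ge>J. \<exists>i\<in>{1..N}. \<exists>k.
      C * 2 powr (\<gamma> * real j) \<le> norm (c i j k) * norm (wavelet \<psi> i j k x)"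
    using in_D_frequently_large[OF inD] by blast
  \<comment> \<open>at this decay rate, \<open>|2^j x - k| > 2^(\<epsilon> j)\<close> would make the term smaller than \<open>2^(\<gamma> j)\<close>\<close>
  define n where "n = (\<bar>w - \<gamma>\<bar> + 1) / \<epsilon>"
  have n: "n > 0" "1 + w - \<gamma> \<le> n * \<epsilon>" using \<epsilon> by (auto simp: n_def)
  obtain C\<psi> where C\<psi>: "C\<psi> \<ge> 1" "\<And>i y. i \<in> {1..N} \<Longrightarrow> norm (\<psi> i y) \<le> C\<psi> * (1 + norm y) powr (- n)"
    using fast_decay_uniform[of "{1..N}" \<psi> n] decay n by auto
  have "eventually (\<lambda>j. B * C\<psi> / C \<le> 2 powr (1 * real j) \<and> C\<psi> / C \<le> 2 powr ((\<gamma> - g) * real j))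
          sequentially"
    using g by (intro eventually_conj eventually_le_two_powr) auto
  then obtain J' where J': "\<And>j. j \<ge> J' \<Longrightarrow>
      B * C\<psi> / C \<le> 2 powr real j \<and> C\<psi> / C \<le> 2 powr ((\<gamma> - g) * real j)"
    unfolding eventually_sequentially by auto
  obtain j i k where j: "j \<ge> max J J'" and i: "i \<in> {1..N}"
    and prod: "C * 2 powr (\<gamma> * real j) \<le> norm (c i j k) * norm (wavelet \<psi> i j k x)"
    using freq by blast
  define y where "y = (2::real) ^ j *\<^sub>R (x - dyadic_corner j k)"
  have prod_y: "C * 2 powr (\<gamma> * real j) \<le> norm (c i j k) * norm (\<psi> i y)"
    using prod by (simp add: y_def wavelet_eq_dyadic_corner)
  have "(1 + norm y) powr (- n) \<le> 1"
    using ge_one_powr_ge_zero[of "1 + norm y" n] n by (simp add: powr_minus inverse_le_1_iff)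
  then have "C\<psi> * (1 + norm y) powr (- n) \<le> C\<psi>"
    using C\<psi>(1) by (intro mult_left_le) auto
  then have psi_le: "norm (\<psi> i y) \<le> C\<psi>"
    using C\<psi>(2)[OF i, of y] by linarith
  have "2 powr (g * real j) \<le> norm (c i j k)"
    by (rule large_product_imp_large_factor[OF C _ norm_ge_zero prod_y psi_le])
       (use C\<psi>(1) J'[of j] j in auto)
  moreover have "1 + norm y \<le> 2 powr (\<epsilon> * real j)"
    by (rule large_product_imp_small_shift[OF C _ n(1) _ _ prod_y norm_ge_zero coeff[OF i]
          norm_ge_zero C\<psi>(2)[OF i] _ n(2)])
       (use C\<psi>(1) J'[of j] j in auto)
  ultimately show ?thesis using j i unfolding y_def by (intro exI[of _ j]) auto
qed

lemma in_D_imp_near_large_coeff: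
  fixes \<psi> :: "nat \<Rightarrow> real^'d \<Rightarrow> complex" and c :: "nat \<Rightarrow> nat \<Rightarrow> int^'d \<Rightarrow> complex"
  assumes decay: "\<And>i. i \<in> {1..N} \<Longrightarrow> fast_decay (\<psi> i)"
    and coeff: "\<And>i j k. i \<in> {1..N} \<Longrightarrow> norm (c i j k) \<le> B * 2 powr (w * real j)"
    and inD: "in_D N \<psi> c \<gamma> x" and g: "g < \<gamma>" and \<epsilon>: "\<epsilon> > 0"
  shows "\<exists>j\<ge>J. \<exists>i\<in>{1..N}. \<exists>k. 2 powr (g * real j) \<le> norm (c i j k) \<and>
           dist x (dyadic_corner j k) \<le> 2 powr (- (1 - \<epsilon>) * real j)"
proof -
  obtain j i k where j: "j \<ge> J" "i \<in> {1..N}" "2 powr (g * real j) \<le> norm (c i j k)"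
    and shift: "1 + norm ((2::real) ^ j *\<^sub>R (x - dyadic_corner j k)) \<le> 2 powr (\<epsilon> * real j)"
    using in_D_imp_large_coeff_small_shift[OF decay coeff inD g \<epsilon>] by blast
  have "dist x (dyadic_corner j k) = norm ((2::real) ^ j *\<^sub>R (x - dyadic_corner j k)) / 2 ^ j"
    by (simp add: dist_norm)
  also have "\<dots> \<le> 2 powr (\<epsilon> * real j) / 2 ^ j"
    using shift by (intro divide_right_mono) auto
  also have "\<dots> = 2 powr (- (1 - \<epsilon>) * real j)"
    by (simp add: powr_realpow[symmetric] powr_diff[symmetric] algebra_simps)
  finally show ?thesis using j by blast
qed

lemma div_exp_le:
  fixes \<psi> :: "nat \<Rightarrow> real^'d \<Rightarrow> complex" and c :: "nat \<Rightarrow> nat \<Rightarrow> int^'d \<Rightarrow> complex"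
  assumes decay: "\<And>i. i \<in> {1..N} \<Longrightarrow> fast_decay (\<psi> i)"
    and coeff: "\<And>i j k. i \<in> {1..N} \<Longrightarrow> norm (c i j k) \<le> B * 2 powr (w * real j)"
  shows "div_exp N \<psi> c x \<le> ereal w"
  unfolding div_exp_def
proof (rule Sup_least, clarify)
  fix \<gamma> assume inD: "in_D N \<psi> c \<gamma> x"
  show "ereal \<gamma> \<le> ereal w"
  proof (rule ccontr)
    assume "\<not> ereal \<gamma> \<le> ereal w"
    then have "w < (w + \<gamma>) / 2" "(w + \<gamma>) / 2 < \<gamma>" by auto
    then obtain J where J: "\<And>j. j \<ge> J \<Longrightarrow> B + 1 \<le> 2 powr (((w + \<gamma>) / 2 - w) * real j)"
      using eventually_le_two_powr[of "(w + \<gamma>) / 2 - w" "B + 1"]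
      unfolding eventually_sequentially by auto
    obtain j i k where j: "j \<ge> J" and i: "i \<in> {1..N}"
      and large: "2 powr ((w + \<gamma>) / 2 * real j) \<le> norm (c i j k)"
      using in_D_imp_near_large_coeff[OF decay coeff inD \<open>(w + \<gamma>) / 2 < \<gamma>\<close>, of 1 J] by auto
    have "((w + \<gamma>) / 2 - w) * real j + w * real j = (w + \<gamma>) / 2 * real j"
      by (simp add: field_simps)
    then have split: "2 powr (((w + \<gamma>) / 2 - w) * real j) * 2 powr (w * real j)
        = 2 powr ((w + \<gamma>) / 2 * real j)"
      by (simp only: powr_add[symmetric])
    have "(B + 1) * 2 powr (w * real j) \<le> 2 powr (((w + \<gamma>) / 2 - w) * real j) * 2 powr (w * real j)"
      using J[OF j] by (intro mult_right_mono) auto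
    also have "\<dots> \<le> B * 2 powr (w * real j)" using split large coeff[OF i, of j k] by linarith
    finally show False by (simp add: algebra_simps)
  qed
qed

lemma div_exp_ge_imp_near_large_coeffs:
  fixes \<psi> :: "nat \<Rightarrow> real^'d \<Rightarrow> complex" and c :: "nat \<Rightarrow> nat \<Rightarrow> int^'d \<Rightarrow> complex"
  assumes decay: "\<And>i. i \<in> {1..N} \<Longrightarrow> fast_decay (\<psi> i)"
    and coeff: "\<And>i j k. i \<in> {1..N} \<Longrightarrow> norm (c i j k) \<le> B * 2 powr (w * real j)"
    and x: "ereal \<gamma> \<le> div_exp N \<psi> c x" and g: "g < \<gamma>" and \<epsilon>: "\<epsilon> > 0"
  shows "\<exists>j\<ge>J. \<exists>z\<in>(\<lambda>(i, k). dyadic_corner j k) ` large_coeffs N c g j.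
           dist x z \<le> 2 powr (- (1 - \<epsilon>) * real j)"
proof -
  have "ereal g < Sup {ereal \<gamma> | \<gamma>. in_D N \<psi> c \<gamma> x}"
    using x g by (simp add: div_exp_def less_le_trans[of _ "ereal \<gamma>"])
  then obtain \<gamma>' where inD: "in_D N \<psi> c \<gamma>' x" and "g < \<gamma>'" by (auto simp: less_Sup_iff)
  then obtain j i k where "j \<ge> J" "i \<in> {1..N}" "2 powr (g * real j) \<le> norm (c i j k)"
      "dist x (dyadic_corner j k) \<le> 2 powr (- (1 - \<epsilon>) * real j)"
    using in_D_imp_near_large_coeff[OF decay coeff inD _ \<epsilon>, of g J] by blast
  then show ?thesis unfolding large_coeffs_def by fastforce
qed

lemma hausdorff_dim_div_exp_superlevel_le:
  fixes \<psi> :: "nat \<Rightarrow> real^'d \<Rightarrow> complex" and c :: "nat \<Rightarrow> nat \<Rightarrow> int^'d \<Rightarrow> complex"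
  assumes decay: "\<And>i. i \<in> {1..N} \<Longrightarrow> fast_decay (\<psi> i)"
    and besov: "in_besov s (ereal P) q N c" and P: "0 < P" and q: "0 < q"
    and \<gamma>: "\<gamma> \<le> - s + real CARD('d) / P"
  shows "hausdorff_dim {x. ereal \<gamma> \<le> div_exp N \<psi> c x} \<le> ereal (real CARD('d) - P * (s + \<gamma>))"
proof (rule hausdorff_dim_le)
  define D where "D = real CARD('d)"
  define r where "r = D - P * (s + \<gamma>)"
  show r: "0 \<le> real CARD('d) - P * (s + \<gamma>)"
    using \<gamma> P by (simp add: field_simps)
  have "\<exists>B. \<forall>i\<in>{1..N}. \<forall>j k. norm (c i j k) \<le> B * 2 powr ((D / P - s) * real j)"
    using in_besov_coeff_bound[OF besov _ q] P by (auto simp: div_p_def D_def)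
  then obtain B where coeff: "\<And>i j k. i \<in> {1..N} \<Longrightarrow> norm (c i j k) \<le> B * 2 powr ((D / P - s) * real j)"
    by blast
  obtain K where card: "\<And>g j. finite (large_coeffs N c g j) \<and>
      real (card (large_coeffs N c g j)) \<le> K * 2 powr ((D - s * P - g * P) * real j)"
    using in_besov_card_large_coeffs[OF besov P q] unfolding D_def by blast
  fix t assume "real CARD('d) - P * (s + \<gamma>) < t"
  then have rt: "r < t" "0 < t" using r by (simp_all add: r_def D_def)
  define g where "g = \<gamma> - (t - r) / (4 * P)"
  define \<epsilon> where "\<epsilon> = (t - r) / (4 * t)"
  define Z where "Z j = (\<lambda>(i, k). dyadic_corner j k) ` large_coeffs N c g j" for j
  show "hausdorff_outer t {x. ereal \<gamma> \<le> div_exp N \<psi> c x} = 0"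
  proof (rule hausdorff_outer_eq_0_if_limsup_cover[of Z K "D - s * P - g * P" "1 - \<epsilon>"])
    fix j
    show "finite (Z j)" using card by (simp add: Z_def)
    have "card (Z j) \<le> card (large_coeffs N c g j)"
      unfolding Z_def using card[of g j] by (intro card_image_le) blast
    then show "real (card (Z j)) \<le> K * 2 powr ((D - s * P - g * P) * real j)"
      using card[of g j] of_nat_le_iff by (smt (verit))
  next
    have "\<epsilon> \<le> 1 / 4" using rt r by (simp add: \<epsilon>_def r_def D_def field_simps)
    then show "0 < 1 - \<epsilon>" by simp
    have "t * (1 - \<epsilon>) = t - (t - r) / 4" using rt by (simp add: \<epsilon>_def field_simps)
    moreover have "D - s * P - g * P = r + (t - r) / 4" using P by (simp add: g_def r_def field_simps)
    ultimately show "t * (1 - \<epsilon>) > D - s * P - g * P" using rt by (simp add: field_simps)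
  next
    fix x J assume "x \<in> {x. ereal \<gamma> \<le> div_exp N \<psi> c x}"
    then show "\<exists>j\<ge>J. \<exists>z\<in>Z j. dist x z \<le> 2 powr (- (1 - \<epsilon>) * real j)"
      unfolding Z_def using rt P
      by (intro div_exp_ge_imp_near_large_coeffs[OF decay coeff]) (auto simp: g_def \<epsilon>_def)
  qed (use rt in auto)
qed

theorem mainTheorem2:
  fixes \<psi> :: "nat \<Rightarrow> real^'d \<Rightarrow> complex"
    and c :: "nat \<Rightarrow> nat \<Rightarrow> int^'d \<Rightarrow> complex"
    and N :: nat and s :: real and p q :: ereal
  assumes "N \<ge> 1"
    and "\<And>i. i \<in> {1..N} \<Longrightarrow> bounded (range (\<psi> i))"
    and "\<And>i. i \<in> {1..N} \<Longrightarrow> fast_decay (\<psi> i)"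
    and "0 < p" and "0 < q"
    and "in_besov s p q N c"
  shows "(\<forall>x. div_exp N \<psi> c x \<le> ereal (div_p CARD('d) p - s)) \<and>
         (\<forall>\<gamma>. -s \<le> \<gamma> \<and> \<gamma> \<le> -s + div_p CARD('d) p \<longrightarrow>
            hausdorff_dim {x. div_exp N \<psi> c x \<ge> ereal \<gamma>}
              \<le> ereal (real CARD('d)) - p * ereal (s + \<gamma>))"
proof (intro conjI allI impI)
  fix x
  obtain B where "\<forall>i\<in>{1..N}. \<forall>j k. norm (c i j k) \<le> B * 2 powr ((div_p CARD('d) p - s) * real j)"
    using in_besov_coeff_bound[OF assms(6,4,5)] by blast
  then show "div_exp N \<psi> c x \<le> ereal (div_p CARD('d) p - s)"
    using div_exp_le[of N \<psi> c B] assms(3) by blast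
next
  fix \<gamma> assume \<gamma>: "-s \<le> \<gamma> \<and> \<gamma> \<le> -s + div_p CARD('d) p"
  show "hausdorff_dim {x. div_exp N \<psi> c x \<ge> ereal \<gamma>} \<le> ereal (real CARD('d)) - p * ereal (s + \<gamma>)"
  proof (cases p)
    case PInf
    then have "s + \<gamma> = 0" using \<gamma> by (simp add: div_p_def)
    then show ?thesis using PInf hausdorff_dim_le_CARD by simp
  next
    case (real P)
    then show ?thesis
      using hausdorff_dim_div_exp_superlevel_le[of N \<psi> s P q c \<gamma>] assms(3-6) \<gamma>
      by (simp add: div_p_def)
  qed (use assms(4) in simp)
qed

end
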